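(* Assume $p(s)=N_s/N$ for all $s\in\mathcal S$, where the $N_s$ are positive integers and $N=\sum_sN_s$. Then every Yokoo–Dubé-type sAEDS for these $N_s$ (as defined in the context) whose state chain is irreducible has average code length $$L\le H(p)+\frac{C}{N},$$ for a constant $C$ that does not depend on $N$ or on the $N_s$; i.e. $L\le H(p)+O(1/N)$.
   Context: Let $\mathcal S$ be a finite alphabet with $|\mathcal S|\ge2$ and $p$ a probability distribution with $p(s)>0$ (i.i.d. source); $\lg=\log_2$, $H(p)=-\sum_sp(s)\lg p(s)$. An AEDS with finite state set $\mathcal X$ consists of maps $E_{\hat x}:\mathcal S\to\{0,1\}^*$, $F^-_{\hat x}:\mathcal S\to\mathcal X$ such that for every $x$ the words $E_{\hat x}(s)$ over pairs with $F^-_{\hat x}(s)=x$ are distinct and prefix-free. The state chain moves from $\hat x$ to $F^-_{\hat x}(s)$ with probability $p(s)$; with its stationary distribution $Q$, the average code length is $L=\sum_{\hat x}\sum_sp(s)Q(\hat x)l(E_{\hat x}(s))$. An sAEDS is an AEDS for which the sets $\mathcal X_s=\{F^-_{\hat x}(s):\hat x\in\mathcal X\}$ are pairwise disjoint with union $\mathcal X$; for $x\in\mathcal X_s$, $\mathcal F^+_x=\{\hat x:F^-_{\hat x}(s)=x\}$ (for fixed $s$ these partition $\mathcal X$). Yokoo–Dubé-type sAEDS: $|\mathcal X|=N$, $|\mathcal X_s|=N_s$, and the states are enumerated $\alpha_1,\dots,\alpha_N$ so that $Q(\alpha_1)\ge\cdots\ge Q(\alpha_N)$. For each $s$ let $\kappa_s=\lceil\lg(N/N_s)\rceil$,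 $m_s=2^{\kappa_s}N_s-N$, and let $A_s,B_s,C_s,D_s\ge0$ be integers with $2^{\kappa_s-1}A_s+B_s=m_s$, $2^{\kappa_s}C_s+D_s=2N-2^{\kappa_s}N_s$, $A_s+C_s+1=N_s$, $B_s+D_s\ge1$ (these imply $2B_s+D_s=2^{\kappa_s}$). Writing $\mathcal X_s=\{\mathsf s_1,\dots,\mathsf s_{N_s}\}$: for $1\le j\le A_s$, $\mathcal F^+_{\mathsf s_j}=\{\alpha_i: B_s+(j-1)2^{\kappa_s-1}<i\le B_s+j2^{\kappa_s-1}\}$, encoded by a fixed-length code of length $\kappa_s-1$; for $1\le j\le C_s$, $\mathcal F^+_{\mathsf s_{A_s+j}}=\{\alpha_i: m_s+(j-1)2^{\kappa_s}<i\le m_s+j2^{\kappa_s}\}$, encoded by a fixed-length code of length $\kappa_s$; and $\mathcal F^+_{\mathsf s_{N_s}}=\{\alpha_1,\dots,\alpha_{B_s}\}\cup\{\alpha_{N-D_s+1},\dots,\alpha_N\}$, encoded by a prefix-free code giving length $\kappa_s-1$ to $\alpha_1,\dots,\alpha_{B_s}$ and length $\kappa_s$ to the others. Thus $l(E_{\alpha_i}(s))=\kappa_s-1$ for $i\le m_s$ and $\kappa_s$ for $i>m_s$. *)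

theory Defs
  imports Complex_Main "HOL-Library.Sublist"
begin

text \<open>States of an AEDS with N states are identified with their enumeration indices
  1..N (state alpha_i is the natural number i).\<close>

definition N_of :: "('s::finite \<Rightarrow> nat) \<Rightarrow> nat" where
  "N_of Ns = (\<Sum>s\<in>UNIV. Ns s)"

definition prob :: "('s::finite \<Rightarrow> nat) \<Rightarrow> 's \<Rightarrow> real" where
  "prob Ns s = real (Ns s) / real (N_of Ns)"

definition entropy :: "('s::finite \<Rightarrow> real) \<Rightarrow> real" where
  "entropy p = - (\<Sum>s\<in>UNIV. p s * log 2 (p s))"

definition kappa :: "('s::finite \<Rightarrow> nat) \<Rightarrow> 's \<Rightarrow> nat" where
  "kappa Ns s = nat \<lceil>log 2 (real (N_of Ns) / real (Ns s))\<rceil>"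

definition mval :: "('s::finite \<Rightarrow> nat) \<Rightarrow> 's \<Rightarrow> int" where
  "mval Ns s = 2 ^ kappa Ns s * int (Ns s) - int (N_of Ns)"

text \<open>AEDS on state set X: F maps into X, and for every x the code words
  E a s over the pairs (a,s) with F a s = x are distinct and prefix-free
  (prefix includes equality, so this covers distinctness).\<close>
definition is_AEDS :: "nat set \<Rightarrow> (nat \<Rightarrow> 's \<Rightarrow> bool list) \<Rightarrow> (nat \<Rightarrow> 's \<Rightarrow> nat) \<Rightarrow> bool" where
  "is_AEDS X E F \<longleftrightarrow>
     (\<forall>x\<in>X. \<forall>s. F x s \<in> X) \<and>
     (\<forall>x\<in>X. \<forall>a\<in>X. \<forall>b\<in>X. \<forall>s t. F a s = x \<and> F b t = x \<and> (a, s) \<noteq> (b, t)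
        \<longrightarrow> \<not> prefix (E a s) (E b t))"

definition Xset :: "nat set \<Rightarrow> (nat \<Rightarrow> 's \<Rightarrow> nat) \<Rightarrow> 's \<Rightarrow> nat set" where
  "Xset X F s = (\<lambda>x. F x s) ` X"

definition is_sAEDS :: "nat set \<Rightarrow> (nat \<Rightarrow> 's \<Rightarrow> bool list) \<Rightarrow> (nat \<Rightarrow> 's \<Rightarrow> nat) \<Rightarrow> bool" where
  "is_sAEDS X E F \<longleftrightarrow> is_AEDS X E F \<and>
     (\<forall>s t. s \<noteq> t \<longrightarrow> Xset X F s \<inter> Xset X F t = {}) \<and>
     (\<Union>s. Xset X F s) = X"

definition stationary :: "('s::finite \<Rightarrow> real) \<Rightarrow> (nat \<Rightarrow> 's \<Rightarrow> nat) \<Rightarrow> nat set \<Rightarrow> (nat \<Rightarrow> real) \<Rightarrow> bool" where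
  "stationary p F X Q \<longleftrightarrow>
     (\<forall>x\<in>X. 0 \<le> Q x) \<and> (\<Sum>x\<in>X. Q x) = 1 \<and>
     (\<forall>y\<in>X. Q y = (\<Sum>x\<in>X. \<Sum>s\<in>{s. F x s = y}. Q x * p s))"

text \<open>Irreducibility of the state chain (all p s > 0, so the transition graph has
  an edge x -> F x s for every s).\<close>
definition irreducible_chain :: "(nat \<Rightarrow> 's \<Rightarrow> nat) \<Rightarrow> nat set \<Rightarrow> bool" where
  "irreducible_chain F X \<longleftrightarrow>
     (\<forall>x\<in>X. \<forall>y\<in>X. (x, y) \<in> {(a, F a s) | a s. a \<in> X}\<^sup>*)"

definition avg_len :: "('s::finite \<Rightarrow> real) \<Rightarrow> (nat \<Rightarrow> real) \<Rightarrow> (nat \<Rightarrow> 's \<Rightarrow> bool list) \<Rightarrow> nat set \<Rightarrow> real" where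
  "avg_len p Q E X = (\<Sum>x\<in>X. \<Sum>s\<in>UNIV. p s * Q x * real (length (E x s)))"

text \<open>Yokoo-Dube-type sAEDS for the integers Ns, with states 1..N enumerated so that
  the stationary distribution Q is nonincreasing; Xs s enumerates X_s as
  Xs s 1, ..., Xs s (Ns s); A, B, C, D are the integer parameters.\<close>
definition YD_sAEDS ::
  "('s::finite \<Rightarrow> nat) \<Rightarrow> (nat \<Rightarrow> 's \<Rightarrow> bool list) \<Rightarrow> (nat \<Rightarrow> 's \<Rightarrow> nat) \<Rightarrow> (nat \<Rightarrow> real)
   \<Rightarrow> ('s \<Rightarrow> nat \<Rightarrow> nat) \<Rightarrow> ('s \<Rightarrow> nat) \<Rightarrow> ('s \<Rightarrow> nat) \<Rightarrow> ('s \<Rightarrow> nat) \<Rightarrow> ('s \<Rightarrow> nat) \<Rightarrow> bool" where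
  "YD_sAEDS Ns E F Q Xs A B C D \<longleftrightarrow>
    (let N = N_of Ns; X = {1..N} in
     is_sAEDS X E F \<and>
     stationary (prob Ns) F X Q \<and>
     (\<forall>i j. 1 \<le> i \<longrightarrow> i \<le> j \<longrightarrow> j \<le> N \<longrightarrow> Q j \<le> Q i) \<and>
     (\<forall>s. let k = kappa Ns s; m = mval Ns s; Fp = (\<lambda>x. {i\<in>X. F i s = x}) in
        card (Xset X F s) = Ns s \<and>
        bij_betw (Xs s) {1..Ns s} (Xset X F s) \<and>
        2 ^ (k - 1) * int (A s) + int (B s) = m \<and>
        2 ^ k * int (C s) + int (D s) = 2 * int N - 2 ^ k * int (Ns s) \<and>
        A s + C s + 1 = Ns s \<and>
        B s + D s \<ge> 1 \<and>
        (\<forall>j. 1 \<le> j \<and> j \<le> A s \<longrightarrow>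
           Fp (Xs s j) = {i. B s + (j - 1) * 2 ^ (k - 1) < i \<and> i \<le> B s + j * 2 ^ (k - 1)}) \<and>
        (\<forall>j. 1 \<le> j \<and> j \<le> C s \<longrightarrow>
           Fp (Xs s (A s + j)) = {i. m + int (j - 1) * 2 ^ k < int i \<and> int i \<le> m + int j * 2 ^ k}) \<and>
        Fp (Xs s (Ns s)) = {1..B s} \<union> {N - D s + 1..N} \<and>
        (\<forall>i\<in>X. length (E i s) = (if int i \<le> m then k - 1 else k))))"

end

(* Each element x of X_s gets a weight w_s(x): the elements of X_s receive the distinct weights
   N_s, ..., 2 N_s - 1, and every state i with F_i(s) = x satisfies 2^l(E_i(s)) w_s(x) <= N + i - 1.
   Hence l(E_i(s)) <= lg(N + i - 1) - lg w_s(F_i(s)), and stationarity turns the Q-average of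
   lg w_s(F_i(s)) into a sum over the sets X_s.  At most j - 1 states y satisfy
   lg((w(y) + 1) / p(s_y)) < lg(N + j - 1), where y is in X_(s_y); as Q is nonincreasing, a
   rearrangement argument bounds the Q-average of lg(N + i - 1) by that of lg((w(y) + 1) / p(s_y)).
   What is left beyond H(p) is the Q-average of lg((w + 1) / w) <= 1 / (N_s ln 2), in total at most
   |S| / (N ln 2). *)

theory Submission
  imports Defs "HOL-Combinatorics.Transposition"
begin

lemma sum_mult_transpose_le:
  fixes Q c :: "'a \<Rightarrow> real"
  assumes "finite S" "k \<in> S" "l \<in> S" and ordered: "0 \<le> (Q k - Q l) * (c k - c l)"
  shows "(\<Sum>i\<in>S. Q i * c (transpose k l i)) \<le> (\<Sum>i\<in>S. Q i * c i)"
proof (cases "k = l")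
  case False
  have "(\<Sum>i\<in>S. Q i * c i) - (\<Sum>i\<in>S. Q i * c (transpose k l i))
      = (\<Sum>i\<in>S. Q i * (c i - c (transpose k l i)))"
    by (simp add: sum_subtractf right_diff_distrib)
  also have "\<dots> = (\<Sum>i\<in>{k, l}. Q i * (c i - c (transpose k l i)))"
    using assms(1-3) by (intro sum.mono_neutral_right) auto
  also have "\<dots> = (Q k - Q l) * (c k - c l)"
    using False by (simp add: algebra_simps)
  finally show ?thesis using ordered by simp
qed simp

lemma weighted_sum_le_if_few_below:
  fixes Q a c :: "nat \<Rightarrow> real"
  assumes "\<And>i j. 1 \<le> i \<Longrightarrow> i \<le> j \<Longrightarrow> j \<le> n \<Longrightarrow> Q j \<le> Q i"
    and "\<And>i. i \<in> {1..n} \<Longrightarrow> 0 \<le> Q i"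
    and "\<And>j. j \<in> {1..n} \<Longrightarrow> card {y\<in>{1..n}. c y < a j} < j"
  shows "(\<Sum>i=1..n. Q i * a i) \<le> (\<Sum>i=1..n. Q i * c i)"
  using assms
proof (induction n arbitrary: c)
  case 0
  then show ?case by simp
next
  case (Suc n)
  obtain k where k: "k \<in> {1..Suc n}" and k_max: "\<And>y. y \<in> {1..Suc n} \<Longrightarrow> c y \<le> c k"
    using Max_in[of "c ` {1..Suc n}"] Max_ge[of "c ` {1..Suc n}"] by fastforce
  define c' where "c' = c \<circ> transpose k (Suc n)"
  have "a (Suc n) \<le> c k"
  proof (rule ccontr)
    assume "\<not> a (Suc n) \<le> c k"
    then have "{y\<in>{1..Suc n}. c y < a (Suc n)} = {1..Suc n}"
      using k_max by force
    then show False using Suc.prems(3)[of "Suc n"] by simp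
  qed
  then have top: "Q (Suc n) * a (Suc n) \<le> Q (Suc n) * c' (Suc n)"
    using Suc.prems(2) by (simp add: c'_def mult_left_mono)
  have "(\<Sum>i=1..n. Q i * a i) \<le> (\<Sum>i=1..n. Q i * c' i)"
  proof (rule Suc.IH)
    fix j assume j: "j \<in> {1..n}"
    have "card {y\<in>{1..n}. c' y < a j} \<le> card {y\<in>{1..Suc n}. c y < a j}"
      by (rule card_inj_on_le[where f = "transpose k (Suc n)"])
        (use k in \<open>auto simp: c'_def transpose_def\<close>)
    also have "\<dots> < j" using Suc.prems(3) j by simp
    finally show "card {y\<in>{1..n}. c' y < a j} < j" .
  qed (use Suc.prems in auto)
  then have "(\<Sum>i=1..Suc n. Q i * a i) \<le> (\<Sum>i=1..Suc n. Q i * c' i)"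
    using top by simp
  also have "\<dots> \<le> (\<Sum>i=1..Suc n. Q i * c i)"
    unfolding c'_def comp_def
  proof (rule sum_mult_transpose_le)
    show "0 \<le> (Q k - Q (Suc n)) * (c k - c (Suc n))"
      using k k_max[of "Suc n"] Suc.prems(1)[of k "Suc n"] by simp
  qed (use k in auto)
  finally show ?case .
qed

lemma log2_Suc_diff_le:
  fixes v :: real
  assumes "0 < v"
  shows "log 2 (v + 1) - log 2 v \<le> 1 / (v * ln 2)"
proof -
  have "ln (v + 1) - ln v = ln ((v + 1) / v)"
    using assms by (simp add: ln_div)
  also have "(v + 1) / v = 1 + 1 / v"
    using assms by (simp add: field_simps)
  also have "ln (1 + 1 / v) \<le> 1 / v"
    using assms by (intro ln_add_one_self_le_self) simp
  finally have "(ln (v + 1) - ln v) / ln 2 \<le> (1 / v) / ln 2"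
    by (rule divide_right_mono) simp
  then show ?thesis by (simp add: log_def diff_divide_distrib)
qed

lemma card_inj_values_below_le:
  fixes v :: "'a \<Rightarrow> nat"
  assumes "inj_on v S" "\<And>y. y \<in> S \<Longrightarrow> n0 \<le> v y" "0 \<le> \<delta>"
  shows "real (card {y\<in>S. real (v y) + 1 \<le> real n0 + \<delta>}) \<le> \<delta>"
proof -
  let ?S = "{y\<in>S. real (v y) + 1 \<le> real n0 + \<delta>}"
  have "v ` ?S \<subseteq> {n0..<n0 + nat \<lfloor>\<delta>\<rfloor>}"
  proof
    fix w assume "w \<in> v ` ?S"
    then obtain y where "y \<in> S" "real w + 1 \<le> real n0 + \<delta>" "w = v y" by auto
    moreover from this assms(2) have "n0 \<le> w" by simp
    ultimately have "int (w + 1 - n0) \<le> \<lfloor>\<delta>\<rfloor>"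
      by (simp add: le_floor_iff of_nat_diff)
    with \<open>n0 \<le> w\<close> show "w \<in> {n0..<n0 + nat \<lfloor>\<delta>\<rfloor>}" by simp
  qed
  then have "card (v ` ?S) \<le> nat \<lfloor>\<delta>\<rfloor>"
    using card_mono[of "{n0..<n0 + nat \<lfloor>\<delta>\<rfloor>}"] by fastforce
  moreover have "card (v ` ?S) = card ?S"
    using assms(1) by (intro card_image) (auto intro: inj_on_subset)
  ultimately show ?thesis
    using assms(3) of_nat_floor[of \<delta>] by linarith
qed

section \<open>Sums over the images of an sAEDS\<close>

lemma sAEDS_Xset_subset: "is_sAEDS X E F \<Longrightarrow> Xset X F s \<subseteq> X"
  unfolding is_sAEDS_def is_AEDS_def Xset_def by blast

lemma sAEDS_Xset_disjoint:
  "is_sAEDS X E F \<Longrightarrow> y \<in> Xset X F s \<Longrightarrow> y \<in> Xset X F t \<Longrightarrow> s = t"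
  unfolding is_sAEDS_def by blast

lemma sAEDS_sum_Xset:
  fixes F :: "nat \<Rightarrow> 's::finite \<Rightarrow> nat"
  assumes "is_sAEDS X E F" "finite X"
  shows "(\<Sum>x\<in>X. h x) = (\<Sum>s\<in>UNIV. \<Sum>y\<in>Xset X F s. h y)"
proof -
  have "(\<Sum>x\<in>(\<Union>s. Xset X F s). h x) = (\<Sum>s\<in>UNIV. \<Sum>y\<in>Xset X F s. h y)"
    using assms sAEDS_Xset_subset[OF assms(1)]
    by (intro sum.UNION_disjoint) (auto simp: is_sAEDS_def intro: finite_subset)
  then show ?thesis
    using assms(1) by (simp add: is_sAEDS_def)
qed

lemma stationary_sum_Xset:
  fixes F :: "nat \<Rightarrow> 's::finite \<Rightarrow> nat"
  assumes sAEDS: "is_sAEDS X E F" and "finite X" and "stationary p F X Q"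
  shows "(\<Sum>y\<in>Xset X F s. Q y * g y) = p s * (\<Sum>x\<in>X. Q x * g (F x s))"
proof -
  have Q_fibre: "Q y = p s * (\<Sum>x\<in>{x\<in>X. F x s = y}. Q x)" if y: "y \<in> Xset X F s" for y
  proof -
    have symbol_unique: "t = s" if "x \<in> X" "F x t = y" for x t
      using sAEDS_Xset_disjoint[OF sAEDS _ y] that by (auto simp: Xset_def)
    have fibre: "{t. F x t = y} = (if F x s = y then {s} else {})" if "x \<in> X" for x
    proof -
      have "{t. F x t = y} \<subseteq> {s}"
        using symbol_unique[OF that] by blast
      then show ?thesis by auto
    qed
    have "Q y = (\<Sum>x\<in>X. \<Sum>t\<in>{t. F x t = y}. Q x * p t)"
      using assms(3) y sAEDS_Xset_subset[OF sAEDS] unfolding stationary_def by blast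
    also have "\<dots> = (\<Sum>x\<in>X. if F x s = y then Q x * p s else 0)"
      by (rule sum.cong) (simp_all add: fibre)
    also have "\<dots> = p s * (\<Sum>x\<in>{x\<in>X. F x s = y}. Q x)"
      by (auto simp: sum.inter_filter[OF \<open>finite X\<close>] sum_distrib_left intro!: sum.cong)
    finally show ?thesis .
  qed
  have "p s * (\<Sum>x\<in>X. Q x * g (F x s))
      = p s * (\<Sum>y\<in>Xset X F s. \<Sum>x\<in>{x\<in>X. F x s = y}. Q x * g y)"
    unfolding Xset_def using \<open>finite X\<close> by (subst sum.image_gen[where g = "\<lambda>x. F x s"]) auto
  also have "\<dots> = (\<Sum>y\<in>Xset X F s. p s * (\<Sum>x\<in>{x\<in>X. F x s = y}. Q x) * g y)"
    by (simp add: sum_distrib_left sum_distrib_right mult_ac)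
  also have "\<dots> = (\<Sum>y\<in>Xset X F s. Q y * g y)"
    using Q_fibre by (intro sum.cong refl) simp
  finally show ?thesis ..
qed

lemma stationary_mass_Xset:
  fixes F :: "nat \<Rightarrow> 's::finite \<Rightarrow> nat"
  assumes "is_sAEDS X E F" "finite X" "stationary p F X Q"
  shows "(\<Sum>y\<in>Xset X F s. Q y) = p s"
proof -
  have "(\<Sum>x\<in>X. Q x) = 1"
    using assms(3) unfolding stationary_def by blast
  then show ?thesis
    using stationary_sum_Xset[OF assms, of "\<lambda>_. 1" s] by simp
qed

section \<open>Weights for the Yokoo-Dube construction\<close>

(* On {1..n} the weights enumerate {n..2n-1}; they are chosen so that 2^l w <= N + i - 1
   (l the code length of state i) is an equality at the first state of every full or half block. *)
definition yd_weight :: "nat \<Rightarrow> nat \<Rightarrow> nat \<Rightarrow> nat" where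
  "yd_weight n a j =
     (if j \<le> a then 2 * n - a + j - 1 else if j < n then n + j - a - 1 else 2 * n - a - 1)"

lemma yd_weight_inj_on: "a < n \<Longrightarrow> inj_on (yd_weight n a) {1..n}"
  unfolding inj_on_def yd_weight_def by (auto split: if_splits)

lemma yd_weight_ge: "a < n \<Longrightarrow> j \<in> {1..n} \<Longrightarrow> n \<le> yd_weight n a j"
  unfolding yd_weight_def by auto

lemma int_yd_weight:
  assumes "a < n" "1 \<le> j" "j \<le> n"
  shows "int (yd_weight n a j) =
    (if j \<le> a then 2 * int n - int a + int j - 1
     else if j < n then int n + int j - int a - 1 else 2 * int n - int a - 1)"
  using assms by (simp add: yd_weight_def of_nat_diff)

(* K = 2^(kappa_s - 1) is the size of a half block; n, a, b, c, d, m stand for N_s, A_s, B_s, C_s,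
   D_s, m_s. *)
context
  fixes N n a b c d K :: nat and m :: int
  assumes AB: "int K * int a + int b = m"
    and m_eq: "m = 2 * int K * int n - int N"
    and CD: "2 * int K * int c + int d = 2 * int N - 2 * int K * int n"
    and AC: "a + c + 1 = n"
begin

lemma yd_weight_bound_half_block:
  assumes "1 \<le> j" "j \<le> a" "b + (j - 1) * K < i" "i \<le> b + j * K"
  shows "(if int i \<le> m then int K else 2 * int K) * int (yd_weight n a j) \<le> int N + int i - 1"
proof -
  have "int K * int j \<le> int K * int a"
    using assms(2) by (simp add: mult_left_mono)
  moreover have "int i \<le> int b + int K * int j" "int b + int K * (int j - 1) < int i"
    using assms(1,3,4) by (simp_all add: of_nat_diff algebra_simps flip: of_nat_mult of_nat_add)
  moreover have "int K * int (yd_weight n a j) = int N + int b + int K * (int j - 1)"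
    using assms(1,2) AC AB m_eq by (simp add: int_yd_weight algebra_simps)
  ultimately show ?thesis
    using AB by simp
qed

lemma yd_weight_bound_full_block:
  assumes "1 \<le> j" "j \<le> c" "m + int (j - 1) * (2 * int K) < int i" "int i \<le> m + int j * (2 * int K)"
  shows "(if int i \<le> m then int K else 2 * int K) * int (yd_weight n a (a + j)) \<le> int N + int i - 1"
proof -
  have "0 \<le> int (j - 1) * (2 * int K)"
    by simp
  then have "\<not> int i \<le> m"
    using assms(3) by linarith
  moreover have "2 * int K * int (yd_weight n a (a + j)) = int N + m + int (j - 1) * (2 * int K)"
    using assms(1,2) AC m_eq by (simp add: int_yd_weight of_nat_diff algebra_simps)
  ultimately show ?thesis
    using assms(3) by simp
qed

lemma yd_weight_bound_last_block:
  assumes "i \<in> {1..b} \<union> {N - d + 1..N}"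
  shows "(if int i \<le> m then int K else 2 * int K) * int (yd_weight n a n) \<le> int N + int i - 1"
proof -
  have c: "int c = int n - int a - 1"
    using AC by simp
  have w: "int K * int (yd_weight n a n) = int N + int b - int K"
    "2 * int K * int (yd_weight n a n) = 2 * int N - int d"
    using AC AB m_eq CD by (simp_all add: int_yd_weight c algebra_simps)
  have bd: "2 * int b + int d = 2 * int K" and dm: "int N - int d - m = 2 * int K * int c"
    using AC AB m_eq CD by (simp_all add: c algebra_simps)
  from assms consider "1 \<le> i" "i \<le> b" | "N - d + 1 \<le> i" "i \<le> N"
    by auto
  then show ?thesis
  proof cases
    case 1
    moreover have "0 \<le> int K * int a"
      by simp
    ultimately have "int i \<le> m"
      using AB by linarith
    with 1 w bd show ?thesis
      by simp
  next
    case 2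
    moreover have "0 \<le> int K * int c"
      by simp
    ultimately have "int N - int d < int i"
      using dm by linarith
    moreover from this have "\<not> int i \<le> m"
      using dm \<open>0 \<le> int K * int c\<close> by linarith
    ultimately show ?thesis
      using w by simp
  qed
qed

end

section \<open>The average code length of a Yokoo-Dube sAEDS\<close>

locale yd_code =
  fixes Ns :: "'s::finite \<Rightarrow> nat" and E :: "nat \<Rightarrow> 's \<Rightarrow> bool list" and F :: "nat \<Rightarrow> 's \<Rightarrow> nat"
    and Q :: "nat \<Rightarrow> real" and Xs :: "'s \<Rightarrow> nat \<Rightarrow> nat" and A B C D :: "'s \<Rightarrow> nat"
  assumes two_symbols: "2 \<le> card (UNIV :: 's set)"
    and Ns_pos: "0 < Ns s"
    and sAEDS: "is_sAEDS {1..N_of Ns} E F"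
    and stationary: "stationary (prob Ns) F {1..N_of Ns} Q"
    and Q_antimono: "1 \<le> i \<Longrightarrow> i \<le> j \<Longrightarrow> j \<le> N_of Ns \<Longrightarrow> Q j \<le> Q i"
    and Xs_bij: "bij_betw (Xs s) {1..Ns s} (Xset {1..N_of Ns} F s)"
    and A_B: "2 ^ (kappa Ns s - 1) * int (A s) + int (B s) = mval Ns s"
    and C_D: "2 ^ kappa Ns s * int (C s) + int (D s) = 2 * int (N_of Ns) - 2 ^ kappa Ns s * int (Ns s)"
    and A_C: "A s + C s + 1 = Ns s"
    and half_blocks: "1 \<le> j \<Longrightarrow> j \<le> A s \<Longrightarrow> {i\<in>{1..N_of Ns}. F i s = Xs s j} =
      {i. B s + (j - 1) * 2 ^ (kappa Ns s - 1) < i \<and> i \<le> B s + j * 2 ^ (kappa Ns s - 1)}"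
    and full_blocks: "1 \<le> j \<Longrightarrow> j \<le> C s \<Longrightarrow> {i\<in>{1..N_of Ns}. F i s = Xs s (A s + j)} =
      {i. mval Ns s + int (j - 1) * 2 ^ kappa Ns s < int i \<and> int i \<le> mval Ns s + int j * 2 ^ kappa Ns s}"
    and last_block: "{i\<in>{1..N_of Ns}. F i s = Xs s (Ns s)} = {1..B s} \<union> {N_of Ns - D s + 1..N_of Ns}"
    and code_length: "i \<in> {1..N_of Ns} \<Longrightarrow>
      length (E i s) = (if int i \<le> mval Ns s then kappa Ns s - 1 else kappa Ns s)"

lemma yd_code_if_YD_sAEDS:
  fixes Ns :: "'s::finite \<Rightarrow> nat"
  assumes "2 \<le> card (UNIV :: 's set)" "\<forall>s. 0 < Ns s" "YD_sAEDS Ns E F Q Xs A B C D"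
  shows "yd_code Ns E F Q Xs A B C D"
proof -
  note YD = assms(3)[unfolded YD_sAEDS_def Let_def]
  show ?thesis
    apply unfold_locales
    subgoal by (fact assms(1))
    subgoal by (fact assms(2)[rule_format])
    using YD by blast+
qed

context yd_code
begin

abbreviation N where "N \<equiv> N_of Ns"
abbreviation X where "X \<equiv> {1..N}"
abbreviation p where "p \<equiv> prob Ns"

lemma Ns_less_N: "Ns s < N"
proof -
  have "UNIV \<noteq> {s}"
  proof
    assume "UNIV = {s}"
    then have "card (UNIV :: 's set) = card {s}"
      by (rule arg_cong)
    with two_symbols show False
      by simp
  qed
  then obtain t where "t \<noteq> s"
    by blast
  then have "Ns s + Ns t = (\<Sum>u\<in>{s, t}. Ns u)"
    by simp
  also have "\<dots> \<le> N"
    unfolding N_of_def by (intro sum_mono2) auto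
  finally show ?thesis
    using Ns_pos[of t] by simp
qed

lemma N_pos: "0 < N"
  by (rule le_less_trans[OF le0 Ns_less_N])

lemma prob_pos: "0 < p s"
  using Ns_pos N_pos by (simp add: prob_def)

lemma sum_real_Ns: "(\<Sum>s\<in>UNIV. real (Ns s)) = real N"
  by (simp add: N_of_def)

lemma sum_prob: "(\<Sum>s\<in>UNIV. p s) = 1"
  using N_pos by (simp add: prob_def sum_real_Ns flip: sum_divide_distrib)

lemma kappa_pos: "1 \<le> kappa Ns s"
proof (rule ccontr)
  assume "\<not> 1 \<le> kappa Ns s"
  then have "kappa Ns s = 0"
    by simp
  then have "mval Ns s < 0"
    using Ns_less_N[of s] by (simp add: mval_def)
  moreover have "0 \<le> 2 ^ (kappa Ns s - 1) * int (A s) + int (B s)"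
    by simp
  ultimately show False
    using A_B[of s] by linarith
qed

lemma A_less_Ns: "A s < Ns s"
  using A_C[of s] by simp

lemma Q_nonneg: "x \<in> X \<Longrightarrow> 0 \<le> Q x"
  using stationary unfolding stationary_def by blast

definition weight :: "'s \<Rightarrow> nat \<Rightarrow> nat" where
  "weight s y = yd_weight (Ns s) (A s) (the_inv_into {1..Ns s} (Xs s) y)"

lemma index_bij: "bij_betw (the_inv_into {1..Ns s} (Xs s)) (Xset X F s) {1..Ns s}"
  by (rule bij_betw_the_inv_into[OF Xs_bij])

lemma weight_ge: "y \<in> Xset X F s \<Longrightarrow> Ns s \<le> weight s y"
  unfolding weight_def using bij_betwE[OF index_bij] by (blast intro: yd_weight_ge[OF A_less_Ns])

lemma weight_inj_on: "inj_on (weight s) (Xset X F s)"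
proof -
  have "inj_on (yd_weight (Ns s) (A s) \<circ> the_inv_into {1..Ns s} (Xs s)) (Xset X F s)"
    using index_bij yd_weight_inj_on[OF A_less_Ns]
    by (intro comp_inj_on) (auto simp: bij_betw_def)
  then show ?thesis
    by (simp add: weight_def[abs_def] comp_def)
qed

abbreviation K where "K s \<equiv> (2::nat) ^ (kappa Ns s - 1)"

lemma two_pow_kappa: "2 ^ kappa Ns s = 2 * K s" "(2::int) ^ kappa Ns s = 2 * int (K s)"
  using kappa_pos[of s] by (cases "kappa Ns s"; simp)+

lemma yd_equations:
  "int (K s) * int (A s) + int (B s) = mval Ns s"
  "mval Ns s = 2 * int (K s) * int (Ns s) - int N"
  "2 * int (K s) * int (C s) + int (D s) = 2 * int N - 2 * int (K s) * int (Ns s)"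
  using A_B[of s] C_D[of s] two_pow_kappa(2)[of s] by (simp_all add: mval_def)

lemma preimage_weight_bound:
  assumes i: "i \<in> X" and j: "j \<in> {1..Ns s}" and "F i s = Xs s j"
  shows "(if int i \<le> mval Ns s then int (K s) else 2 * int (K s)) * int (yd_weight (Ns s) (A s) j)
    \<le> int N + int i - 1"
proof -
  note bounds = yd_weight_bound_half_block yd_weight_bound_full_block yd_weight_bound_last_block
  note yd_bounds = bounds[OF yd_equations[of s] A_C]
  have ij: "i \<in> {i \<in> X. F i s = Xs s j}"
    using assms by simp
  consider "j \<le> A s" | "A s < j" "j < Ns s" | "j = Ns s"
    using j by force
  then show ?thesis
  proof cases
    case 1
    have "1 \<le> j"
      using j by simp
    from ij have "i \<in> {i. B s + (j - 1) * K s < i \<and> i \<le> B s + j * K s}"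
      unfolding half_blocks[OF \<open>1 \<le> j\<close> 1] .
    then show ?thesis
      using yd_bounds(1)[of j i] \<open>1 \<le> j\<close> 1 by simp
  next
    case 2
    define j' where "j' = j - A s"
    have j': "1 \<le> j'" "j' \<le> C s" "j = A s + j'"
      using 2 A_C[of s] by (auto simp: j'_def)
    have "mval Ns s + int (j' - 1) * (2 * int (K s)) < int i \<and> int i \<le> mval Ns s + int j' * (2 * int (K s))"
      using ij full_blocks[of j' s] j' two_pow_kappa(2)[of s] by auto
    then show ?thesis
      using yd_bounds(2)[of j' i] j' by simp
  next
    case 3
    from ij have "i \<in> {1..B s} \<union> {N - D s + 1..N}"
      unfolding 3 last_block .
    then show ?thesis
      using yd_bounds(3) 3 by simp
  qed
qed

lemma weight_code_length_bound:
  assumes i: "i \<in> X"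
  shows "2 ^ length (E i s) * real (weight s (F i s)) \<le> real N + real i - 1"
proof -
  define j where "j = the_inv_into {1..Ns s} (Xs s) (F i s)"
  have "F i s \<in> Xset X F s"
    using i by (auto simp: Xset_def)
  then have "j \<in> {1..Ns s}" "F i s = Xs s j"
    using bij_betwE[OF index_bij] f_the_inv_into_f_bij_betw[OF Xs_bij] by (auto simp: j_def)
  from preimage_weight_bound[OF i this]
  have "(if int i \<le> mval Ns s then int (K s) else 2 * int (K s)) * int (weight s (F i s))
      \<le> int N + int i - 1"
    by (simp add: weight_def j_def)
  moreover have "int (2 ^ length (E i s)) = (if int i \<le> mval Ns s then int (K s) else 2 * int (K s))"
    using code_length[OF i, of s] two_pow_kappa[of s] by auto
  ultimately have "real_of_int (int (2 ^ length (E i s) * weight s (F i s)))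
      \<le> real_of_int (int N + int i - 1)"
    by (simp only: of_int_le_iff of_nat_mult)
  then show ?thesis
    by simp
qed

lemma F_in_Xset: "i \<in> X \<Longrightarrow> F i s \<in> Xset X F s"
  by (auto simp: Xset_def)

lemma mass_Xset: "(\<Sum>y\<in>Xset X F s. Q y) = p s"
  by (rule stationary_mass_Xset[OF sAEDS finite_atLeastAtMost stationary])

lemma sum_Xset_stationary: "(\<Sum>y\<in>Xset X F s. Q y * g y) = p s * (\<Sum>x\<in>X. Q x * g (F x s))"
  by (rule stationary_sum_Xset[OF sAEDS finite_atLeastAtMost stationary])

lemma weight_pos: "y \<in> Xset X F s \<Longrightarrow> 0 < weight s y"
  using weight_ge Ns_pos by (metis less_le_trans)

lemma length_le_log:
  assumes "i \<in> X"
  shows "real (length (E i s)) \<le> log 2 (real N + real i - 1) - log 2 (weight s (F i s))"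
proof -
  have w: "0 < real (weight s (F i s))"
    using weight_pos[OF F_in_Xset[OF assms]] by simp
  have "log 2 (2 ^ length (E i s) * real (weight s (F i s))) \<le> log 2 (real N + real i - 1)"
    using weight_code_length_bound[OF assms] w assms N_pos by (subst log_le_cancel_iff) auto
  then show ?thesis
    using w by (simp add: log_mult log_nat_power)
qed

definition symbol_of :: "nat \<Rightarrow> 's" where
  "symbol_of y = (THE s. y \<in> Xset X F s)"

lemma symbol_of_eq: "y \<in> Xset X F s \<Longrightarrow> symbol_of y = s"
  unfolding symbol_of_def by (rule the_equality) (use sAEDS_Xset_disjoint[OF sAEDS] in blast)+

definition position_bound :: "nat \<Rightarrow> real" where
  "position_bound y = log 2 ((real (weight (symbol_of y) y) + 1) / p (symbol_of y))"

lemma card_position_bound_below: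
  assumes j: "j \<in> X"
  shows "card {y\<in>X. position_bound y < log 2 (real N + real j - 1)} < j"
proof -
  define \<delta> where "\<delta> s = real (j - 1) * real (Ns s) / real N" for s
  define S where "S s = {y\<in>Xset X F s. real (weight s y) + 1 \<le> real (Ns s) + \<delta> s}" for s
  have "{y\<in>X. position_bound y < log 2 (real N + real j - 1)} \<subseteq> (\<Union>s. S s)"
  proof
    fix y assume y: "y \<in> {y\<in>X. position_bound y < log 2 (real N + real j - 1)}"
    then obtain s where ys: "y \<in> Xset X F s"
      using sAEDS unfolding is_sAEDS_def by blast
    have "log 2 ((real (weight s y) + 1) / p s) < log 2 (real N + real j - 1)"
      using y symbol_of_eq[OF ys] by (simp add: position_bound_def)
    then have "(real (weight s y) + 1) / p s < real N + real j - 1"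
      using prob_pos[of s] j by (subst (asm) log_less_cancel_iff) auto
    then have "real (weight s y) + 1 < (real N + real j - 1) * p s"
      using prob_pos[of s] by (simp add: divide_less_eq)
    also have "\<dots> = real (Ns s) + \<delta> s"
      using j N_pos by (simp add: \<delta>_def prob_def field_simps of_nat_diff)
    finally show "y \<in> (\<Union>s. S s)"
      using ys by (auto simp: S_def)
  qed
  moreover have "finite (\<Union>s. S s)"
    using sAEDS_Xset_subset[OF sAEDS] by (auto simp: S_def intro: finite_subset)
  ultimately have "card {y\<in>X. position_bound y < log 2 (real N + real j - 1)} \<le> card (\<Union>s. S s)"
    by (rule card_mono[rotated])
  also have "\<dots> \<le> (\<Sum>s\<in>UNIV. card (S s))"
    by (rule card_UN_le) simp
  finally have "real (card {y\<in>X. position_bound y < log 2 (real N + real j - 1)})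
      \<le> (\<Sum>s\<in>UNIV. real (card (S s)))"
    by (simp flip: of_nat_sum)
  also have "\<dots> \<le> (\<Sum>s\<in>UNIV. \<delta> s)"
    unfolding S_def using weight_inj_on weight_ge
    by (intro sum_mono card_inj_values_below_le) (auto simp: \<delta>_def)
  also have "\<dots> = real (j - 1) * (\<Sum>s\<in>UNIV. real (Ns s)) / real N"
    by (simp add: \<delta>_def sum_distrib_left flip: sum_divide_distrib)
  also have "\<dots> = real (j - 1)"
    using N_pos by (simp add: sum_real_Ns)
  finally have "card {y\<in>X. position_bound y < log 2 (real N + real j - 1)} \<le> j - 1"
    by (simp only: of_nat_le_iff)
  then show ?thesis
    using j by auto
qed

lemma avg_len_le_sum_log:
  "avg_len p Q E X \<le> (\<Sum>x\<in>X. Q x * log 2 (real N + real x - 1))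
     - (\<Sum>s\<in>UNIV. \<Sum>y\<in>Xset X F s. Q y * log 2 (weight s y))"
proof -
  have "avg_len p Q E X \<le> (\<Sum>x\<in>X. \<Sum>s\<in>UNIV.
      p s * Q x * (log 2 (real N + real x - 1) - log 2 (weight s (F x s))))"
    unfolding avg_len_def using Q_nonneg prob_pos[THEN less_imp_le]
    by (intro sum_mono mult_left_mono length_le_log) auto
  also have "\<dots> = (\<Sum>x\<in>X. \<Sum>s\<in>UNIV. p s * (Q x * log 2 (real N + real x - 1)))
      - (\<Sum>x\<in>X. \<Sum>s\<in>UNIV. p s * (Q x * log 2 (weight s (F x s))))"
    by (simp add: right_diff_distrib sum_subtractf mult_ac)
  also have "(\<Sum>x\<in>X. \<Sum>s\<in>UNIV. p s * (Q x * log 2 (real N + real x - 1)))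
      = (\<Sum>x\<in>X. Q x * log 2 (real N + real x - 1))"
    by (simp add: sum_prob flip: sum_distrib_right)
  also have "(\<Sum>x\<in>X. \<Sum>s\<in>UNIV. p s * (Q x * log 2 (weight s (F x s))))
      = (\<Sum>s\<in>UNIV. p s * (\<Sum>x\<in>X. Q x * log 2 (weight s (F x s))))"
    by (subst sum.swap) (simp add: sum_distrib_left)
  also have "\<dots> = (\<Sum>s\<in>UNIV. \<Sum>y\<in>Xset X F s. Q y * log 2 (weight s y))"
    by (simp only: sum_Xset_stationary)
  finally show ?thesis .
qed

lemma sum_log_le_position_bound:
  "(\<Sum>x\<in>X. Q x * log 2 (real N + real x - 1))
     \<le> (\<Sum>s\<in>UNIV. \<Sum>y\<in>Xset X F s. Q y * (log 2 (real (weight s y) + 1) - log 2 (p s)))"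
proof -
  have "(\<Sum>x\<in>X. Q x * log 2 (real N + real x - 1)) \<le> (\<Sum>x\<in>X. Q x * position_bound x)"
    using Q_antimono Q_nonneg card_position_bound_below
    by (rule weighted_sum_le_if_few_below)
  also have "\<dots> = (\<Sum>s\<in>UNIV. \<Sum>y\<in>Xset X F s. Q y * position_bound y)"
    by (rule sAEDS_sum_Xset[OF sAEDS]) simp
  also have "\<dots> = (\<Sum>s\<in>UNIV. \<Sum>y\<in>Xset X F s. Q y * (log 2 (real (weight s y) + 1) - log 2 (p s)))"
    using prob_pos[THEN less_imp_neq, THEN not_sym]
    by (intro sum.cong refl) (simp add: position_bound_def symbol_of_eq log_divide)
  finally show ?thesis .
qed

lemma entropy_eq_sum_Xset:
  "entropy p = - (\<Sum>s\<in>UNIV. \<Sum>y\<in>Xset X F s. Q y * log 2 (p s))"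
proof -
  have "entropy p = - (\<Sum>s\<in>UNIV. (\<Sum>y\<in>Xset X F s. Q y) * log 2 (p s))"
    unfolding entropy_def mass_Xset ..
  then show ?thesis
    by (simp add: sum_distrib_right)
qed

lemma log_weight_redundancy_le:
  "(\<Sum>s\<in>UNIV. \<Sum>y\<in>Xset X F s. Q y * (log 2 (real (weight s y) + 1) - log 2 (weight s y)))
     \<le> real (card (UNIV :: 's set)) / ln 2 / real N"
proof -
  have "(\<Sum>s\<in>UNIV. \<Sum>y\<in>Xset X F s. Q y * (log 2 (real (weight s y) + 1) - log 2 (weight s y)))
      \<le> (\<Sum>s\<in>UNIV. \<Sum>y\<in>Xset X F s. Q y * (1 / (real (Ns s) * ln 2)))"
  proof (intro sum_mono mult_left_mono)
    fix s y assume y: "y \<in> Xset X F s"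
    have "log 2 (real (weight s y) + 1) - log 2 (weight s y) \<le> 1 / (real (weight s y) * ln 2)"
      using weight_pos[OF y] by (intro log2_Suc_diff_le) simp
    also have "\<dots> \<le> 1 / (real (Ns s) * ln 2)"
      using weight_ge[OF y] Ns_pos[of s] by (intro divide_left_mono mult_right_mono) auto
    finally show "log 2 (real (weight s y) + 1) - log 2 (weight s y) \<le> 1 / (real (Ns s) * ln 2)" .
    show "0 \<le> Q y"
      using y sAEDS_Xset_subset[OF sAEDS] Q_nonneg by blast
  qed
  also have "\<dots> = (\<Sum>s\<in>UNIV. p s / (real (Ns s) * ln 2))"
    by (simp only: mass_Xset times_divide_eq_right mult_1_right flip: sum_divide_distrib)
  also have "\<dots> = (\<Sum>s\<in>(UNIV :: 's set). 1 / ln 2 / real N)"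
    by (intro sum.cong refl) (simp add: prob_def Ns_pos[THEN less_imp_neq, THEN not_sym])
  finally show ?thesis
    by simp
qed

theorem avg_len_le_entropy:
  "avg_len p Q E X \<le> entropy p + real (card (UNIV :: 's set)) / ln 2 / real N"
  using avg_len_le_sum_log sum_log_le_position_bound entropy_eq_sum_Xset log_weight_redundancy_le
  by (simp add: algebra_simps sum_subtractf sum.distrib)

end

theorem theorem7:
  fixes alphabet :: "'s::finite itself"
  assumes "card (UNIV :: 's set) \<ge> 2"
  shows "\<exists>Cst::real. \<forall>(Ns :: 's \<Rightarrow> nat) E F Q Xs A B C D.
           (\<forall>s. 0 < Ns s) \<and> YD_sAEDS Ns E F Q Xs A B C D \<and>
           irreducible_chain F {1..N_of Ns}
           \<longrightarrow> avg_len (prob Ns) Q E {1..N_of Ns} \<le> entropy (prob Ns) + Cst / real (N_of Ns)"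
proof (intro exI[of _ "real (card (UNIV :: 's set)) / ln 2"] allI impI)
  fix Ns :: "'s \<Rightarrow> nat" and E F Q Xs A B C D
  assume "(\<forall>s. 0 < Ns s) \<and> YD_sAEDS Ns E F Q Xs A B C D \<and> irreducible_chain F {1..N_of Ns}"
  then have "yd_code Ns E F Q Xs A B C D"
    using yd_code_if_YD_sAEDS assms by blast
  then show "avg_len (prob Ns) Q E {1..N_of Ns}
      \<le> entropy (prob Ns) + real (card (UNIV :: 's set)) / ln 2 / real (N_of Ns)"
    by (rule yd_code.avg_len_le_entropy)
qed

end
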